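(* Let $p$ be a prime and let $G$ be a nontrivial finite $p$-group. Then $n_G=\exp(G)$ if and only if $G$ is cyclic, or $\exp(G)=p$, or $G$ is a dihedral $2$-group, i.e. $G\cong D_{2^{m+1}}=\langle x,y \mid x^{2^{m}}=y^2=1,\ x^y=x^{-1}\rangle$ for some integer $m\ge 1$.
   Context: For a finite group $G$ and $x\in G$, let $I_{\mathcal C}(x)=\{y\in G : \langle x,y\rangle \text{ is cyclic}\}$ (the closed neighborhood of $x$ in the enhanced power graph of $G$; it contains $1$ and $x$). For a nontrivial finite group $G$, $n_G=\max\{|I_{\mathcal C}(x)| : x\in G\setminus\{1\}\}$. $\exp(G)$ denotes the exponent of $G$. *)

theory Defs
  imports "HOL-Algebra.Algebra"
begin

text \<open>Closed neighbourhood of x in the enhanced power graph: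
  all y such that the subgroup generated by x and y is cyclic.\<close>
definition enh_nbhd :: "('a, 'b) monoid_scheme \<Rightarrow> 'a \<Rightarrow> 'a set" where
  "enh_nbhd G x = {y \<in> carrier G. cyclic_group (subgroup_generated G {x, y})}"

definition n_G :: "('a, 'b) monoid_scheme \<Rightarrow> nat" where
  "n_G G = Max ((\<lambda>x. card (enh_nbhd G x)) ` (carrier G - {\<one>\<^bsub>G\<^esub>}))"

definition group_exp :: "('a, 'b) monoid_scheme \<Rightarrow> nat" where
  "group_exp G = Lcm (group.ord G ` carrier G)"

text \<open>Dihedral group of order 2n: pairs (a,s) standing for x^a y^s,
  with 0 \<le> a < n, where y x y^-1 = x^-1.\<close>
definition dihedral_group :: "nat \<Rightarrow> (int \<times> bool) monoid" where
  "dihedral_group n =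
     \<lparr> carrier = {0..<int n} \<times> (UNIV :: bool set),
       monoid.mult = (\<lambda>(a, s) (b, t). ((if s then a - b else a + b) mod int n, s \<noteq> t)),
       monoid.one = (0, False) \<rparr>"

end

theory Submission
  imports Defs "HOL-Number_Theory.Residues"
begin

text \<open>
  In a \<open>p\<close>-group the exponent is the largest element order, say \<open>ord x\<close>, and the cyclic
  subgroup generated by \<open>x\<close> lies in the neighbourhood of \<open>x\<close>; hence \<open>exp(G) \<le> n\<^sub>G\<close> always.
  For a cyclic group the reverse bound is trivial, if \<open>exp(G) = p\<close> the neighbourhood of every
  \<open>a \<noteq> 1\<close> is just \<open>\<langle>a\<rangle>\<close>, and in a dihedral group it lies in the rotation subgroup or in \<open>{1, a}\<close>.

  Conversely let \<open>n\<^sub>G = exp(G) = p\<^sup>e\<close> with \<open>e \<ge> 2\<close> and \<open>C = \<langle>x\<rangle>\<close> proper.  Every nontrivial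
  \<open>c \<in> C\<close> then has neighbourhood exactly \<open>C\<close>, so no element outside \<open>C\<close> has a nontrivial
  power in \<open>C\<close>.  Since normalizers grow in \<open>p\<close>-groups, some \<open>h \<notin> C\<close> with \<open>h\<^sup>p = 1\<close>
  normalizes \<open>C\<close>, say \<open>h x h\<^sup>-\<^sup>1 = x\<^sup>r\<close>.  For odd \<open>p\<close>, Fermat gives \<open>r \<equiv> 1 (mod p)\<close>, so
  \<open>s = 1 + r + \<dots> + r\<^sup>p\<^sup>-\<^sup>1 \<equiv> p (mod p\<^sup>2)\<close> and \<open>(x h)\<^sup>p = x\<^sup>s\<close> is a nontrivial element of \<open>C\<close>,
  although \<open>x h \<notin> C\<close>.  So \<open>p = 2\<close>, and the same facts force every element outside \<open>C\<close> to
  be an involution inverting \<open>x\<close> and \<open>C\<close> to have index 2: \<open>G\<close> is dihedral.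
\<close>

section \<open>Congruences\<close>

lemma pow_prime_cong_one_imp_cong_one:
  fixes p r :: nat
  assumes p: "Factorial_Ring.prime p" and r: "[r ^ p = 1] (mod p)"
  shows "[r = 1] (mod p)"
proof -
  have "\<not> p dvd r"
  proof
    assume "p dvd r"
    then have "[r ^ p = 0] (mod p)"
      using p by (simp add: cong_0_iff) (meson dvd_power dvd_trans prime_gt_0_nat)
    with r have "[1 = 0] (mod p)"
      by (metis cong_sym cong_trans)
    then show False
      using p by (simp add: cong_0_iff)
  qed
  then have "[r ^ (p - 1) = 1] (mod p)"
    by (rule fermat_theorem[OF p])
  then have "[r * r ^ (p - 1) = r * 1] (mod p)"
    by (rule cong_scalar_left)
  moreover have "r * r ^ (p - 1) = r ^ p"
    using p prime_gt_0_nat by (metis Suc_diff_1 power_Suc)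
  ultimately show ?thesis
    using r by (metis cong_sym cong_trans mult_1_right)
qed

text \<open>Doubled, so that the quadratic term \<open>p t n (n - 1) / 2\<close> needs no division.\<close>

lemma geometric_sum_mod_square:
  fixes p t :: int
  shows "p\<^sup>2 dvd 2 * (\<Sum>i<n. (1 + p * t) ^ i) - 2 * int n - p * t * int n * (int n - 1)"
proof (induction n)
  case 0
  then show ?case by simp
next
  case (Suc n)
  let ?r = "1 + p * t" and ?S = "\<lambda>n. \<Sum>i<n. (1 + p * t) ^ i"
  have "?S (Suc n) = 1 + ?r * ?S n"
    unfolding sum.lessThan_Suc_shift by (simp add: sum_distrib_left)
  then have "2 * ?S (Suc n) - 2 * int (Suc n) - p * t * int (Suc n) * (int (Suc n) - 1)
      = ?r * (2 * ?S n - 2 * int n - p * t * int n * (int n - 1)) + p\<^sup>2 * (t\<^sup>2 * int n * (int n - 1))"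
    by (simp add: algebra_simps power2_eq_square of_nat_Suc)
  then show ?case
    using Suc.IH by (simp add: dvd_add)
qed

lemma prime_square_not_dvd_geometric_sum:
  fixes p r :: nat
  assumes p: "Factorial_Ring.prime p" "p \<noteq> 2" and r: "[r = 1] (mod p)"
  shows "\<not> p\<^sup>2 dvd (\<Sum>i<p. r ^ i)"
proof
  assume dvd: "p\<^sup>2 dvd (\<Sum>i<p. r ^ i)"
  obtain t where "r = 1 + t * p"
    using r p cong_to_1'_nat by (auto simp: prime_nat_iff)
  then have sum: "int (\<Sum>i<p. r ^ i) = (\<Sum>i<p. (1 + int p * int t) ^ i)"
    by (simp add: of_nat_sum algebra_simps)
  let ?S = "2 * (\<Sum>i<p. (1 + int p * int t) ^ i)" and ?T = "int p * int t * int p * (int p - 1)"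
  have "(int p)\<^sup>2 dvd ?S"
    using dvd unfolding sum[symmetric] by (simp add: int_dvd_int_iff[symmetric])
  moreover have "(int p)\<^sup>2 dvd ?S - 2 * int p - ?T"
    by (rule geometric_sum_mod_square)
  moreover have "(int p)\<^sup>2 dvd ?T"
    by (simp add: power2_eq_square)
  ultimately have "(int p)\<^sup>2 dvd ?S - (?S - 2 * int p - ?T) - ?T"
    by (rule dvd_diff[OF dvd_diff])
  then have "int p * int p dvd 2 * int p"
    by (simp add: power2_eq_square)
  then have "p dvd 2"
    using p by (simp add: prime_gt_0_nat flip: int_dvd_int_iff)
  then show False
    using p by (simp add: primes_dvd_imp_eq)
qed

lemma four_not_dvd_square_plus_one: "\<not> (4::nat) dvd s * s + 1"
proof
  assume "4 dvd s * s + 1"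
  then have "even (s * s + 1)"
    by (metis dvd_trans even_numeral)
  then obtain q where "s = 2 * q + 1"
    by (auto elim: oddE)
  then have "s * s + 1 = 4 * (q * q + q) + 2"
    by (simp add: algebra_simps)
  with \<open>4 dvd s * s + 1\<close> show False
    by presburger
qed

section \<open>Fixed points of \<open>p\<close>-group actions\<close>

lemma (in group) lcoset_mult_closed:
  assumes K: "subgroup K G" and g: "g \<in> carrier G" and R: "R \<in> lcosets K"
  shows "g <# R \<in> lcosets K"
proof -
  obtain a where a: "a \<in> carrier G" "R = a <# K"
    using R unfolding LCOSETS_def by blast
  then have "g <# R = (g \<otimes> a) <# K"
    using g K by (simp add: lcos_m_assoc subgroup.subset)
  then show ?thesis
    using g a unfolding LCOSETS_def by auto
qed

lemma (in group) lcoset_mult_Bij: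
  assumes K: "subgroup K G" and g: "g \<in> carrier G"
  shows "(\<lambda>R \<in> lcosets K. g <# R) \<in> Bij (lcosets K)"
proof -
  have cancel: "inv h <# (h <# R) = R" if h: "h \<in> carrier G" and R: "R \<in> lcosets K" for h R
  proof -
    have "R \<subseteq> carrier G"
      using subgroup.lcosets_carrier[OF K is_group R] .
    then show ?thesis
      using h by (simp add: lcos_m_assoc lcos_mult_one)
  qed
  have "bij_betw (\<lambda>R. g <# R) (lcosets K) (lcosets K)"
  proof (rule bij_betw_byWitness[where f' = "\<lambda>R. inv g <# R"])
    show "\<forall>R \<in> lcosets K. inv g <# (g <# R) = R"
      using cancel g by blast
    show "\<forall>R \<in> lcosets K. g <# (inv g <# R) = R"
      using cancel[of "inv g"] g by simp
    show "(\<lambda>R. g <# R) ` (lcosets K) \<subseteq> lcosets K" "(\<lambda>R. inv g <# R) ` (lcosets K) \<subseteq> lcosets K"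
      using lcoset_mult_closed[OF K] g by auto
  qed
  then show ?thesis
    unfolding Bij_def using bij_betw_cong[of "lcosets K" "\<lambda>R \<in> lcosets K. g <# R" "\<lambda>R. g <# R"]
    by simp
qed

lemma (in group) lcosets_left_mult_action:
  assumes K: "subgroup K G"
  shows "group_action G (lcosets K) (\<lambda>g. \<lambda>R \<in> lcosets K. g <# R)"
proof -
  let ?E = "lcosets K" and ?\<phi> = "\<lambda>g. \<lambda>R \<in> lcosets K. g <# R"
  have "?\<phi> \<in> hom G (BijGroup ?E)"
  proof (rule homI)
    fix g h assume g: "g \<in> carrier G" and h: "h \<in> carrier G"
    have "?\<phi> (g \<otimes> h) R = compose ?E (?\<phi> g) (?\<phi> h) R" for R
      using g h lcoset_mult_closed[OF K] subgroup.lcosets_carrier[OF K is_group]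
      by (simp add: compose_def lcos_m_assoc)
    then have "?\<phi> (g \<otimes> h) = compose ?E (?\<phi> g) (?\<phi> h)"
      by (rule ext)
    then show "?\<phi> (g \<otimes> h) = ?\<phi> g \<otimes>\<^bsub>BijGroup ?E\<^esub> ?\<phi> h"
      using lcoset_mult_Bij[OF K] g h by (simp add: BijGroup_def)
  qed (simp add: BijGroup_def lcoset_mult_Bij[OF K])
  then show ?thesis
    unfolding group_action_def group_hom_def group_hom_axioms_def
    using group_BijGroup is_group by blast
qed

lemma (in group_action) orbit_eq_singleton_iff:
  assumes x: "x \<in> E"
  shows "orbit G \<phi> x = {x} \<longleftrightarrow> (\<forall>g \<in> carrier G. \<phi> g x = x)"
proof
  assume "orbit G \<phi> x = {x}"
  then show "\<forall>g \<in> carrier G. \<phi> g x = x"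
    unfolding orbit_def by blast
next
  assume "\<forall>g \<in> carrier G. \<phi> g x = x"
  then have "orbit G \<phi> x \<subseteq> {x}"
    unfolding orbit_def by blast
  then show "orbit G \<phi> x = {x}"
    using orbit_refl[OF x] by blast
qed

lemma (in group_action) singleton_orbits:
  "{orb \<in> orbits G E \<phi>. card orb = 1} = (\<lambda>x. {x}) ` {x \<in> E. \<forall>g \<in> carrier G. \<phi> g x = x}"
proof (intro equalityI subsetI)
  fix orb assume "orb \<in> {orb \<in> orbits G E \<phi>. card orb = 1}"
  then obtain x where x: "x \<in> E" "orb = orbit G \<phi> x" and "card orb = 1"
    unfolding orbits_def by blast
  then have "orb = {x}"
    using orbit_refl[OF x(1)] by (metis card_1_singletonE singletonD)
  then show "orb \<in> (\<lambda>x. {x}) ` {x \<in> E. \<forall>g \<in> carrier G. \<phi> g x = x}"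
    using orbit_eq_singleton_iff x by blast
next
  fix orb assume "orb \<in> (\<lambda>x. {x}) ` {x \<in> E. \<forall>g \<in> carrier G. \<phi> g x = x}"
  then obtain x where "x \<in> E" "\<forall>g \<in> carrier G. \<phi> g x = x" "orb = {x}"
    by blast
  then show "orb \<in> {orb \<in> orbits G E \<phi>. card orb = 1}"
    using orbit_eq_singleton_iff unfolding orbits_def by auto
qed

lemma (in group_action) p_group_card_fixed_points_cong:
  assumes finE: "finite E" and p: "Factorial_Ring.prime p" and order: "order G = p ^ k"
  shows "[card {x \<in> E. \<forall>g \<in> carrier G. \<phi> g x = x} = card E] (mod p)"
proof -
  let ?O = "orbits G E \<phi>"
  have card_orbit: "card orb = 1 \<or> p dvd card orb" if orb: "orb \<in> ?O" for orb
  proof -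
    obtain x where x: "x \<in> E" "orb = orbit G \<phi> x"
      using orb unfolding orbits_def by blast
    have "card orb dvd p ^ k"
      using orbit_stabilizer_theorem[OF x(1)] order x(2) by (metis dvd_triv_left)
    then obtain j where "card orb = p ^ j"
      using divides_primepow_nat[OF p] by blast
    then show ?thesis
      by (cases j) auto
  qed
  have "card E = (\<Sum>x\<in>E. 1)"
    by simp
  also have "\<dots> = (\<Sum>orb\<in>?O. \<Sum>x\<in>orb. 1)"
    by (rule disjoint_sum[OF finE, symmetric])
  also have "\<dots> = (\<Sum>orb\<in>?O. card orb)"
    by simp
  also have "[\<dots> = (\<Sum>orb\<in>?O. if card orb = 1 then 1 else 0)] (mod p)"
    by (rule cong_sum) (use card_orbit in \<open>auto simp: cong_0_iff\<close>)
  also have "(\<Sum>orb\<in>?O. if card orb = 1 then 1 else 0) = card {orb \<in> ?O. card orb = 1}"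
    using finE by (simp add: sum.If_cases Int_def orbits_def)
  also have "\<dots> = card {x \<in> E. \<forall>g \<in> carrier G. \<phi> g x = x}"
    unfolding singleton_orbits by (rule card_image) (simp add: inj_on_def)
  finally show ?thesis
    by (rule cong_sym)
qed

lemma (in group) p_group_fixed_lcoset:
  assumes fin: "finite (carrier G)" and p: "Factorial_Ring.prime p"
    and card: "card (carrier G) = p ^ k"
    and K: "subgroup K G" and proper: "K \<noteq> carrier G"
  shows "\<exists>R \<in> lcosets K. R \<noteq> K \<and> (\<forall>h \<in> K. h <# R = R)"
proof -
  let ?E = "lcosets K" and ?\<phi> = "\<lambda>g. \<lambda>R \<in> lcosets K. g <# R"
  let ?F = "{R \<in> ?E. \<forall>h \<in> K. h <# R = R}"
  have lagrange: "card ?E * card K = p ^ k"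
    using l_lagrange[OF fin K] card by (simp add: order_def)
  obtain i j where i: "card ?E = p ^ i" and j: "card K = p ^ j"
    using lagrange divides_primepow_nat[OF p] by (metis dvd_triv_left dvd_triv_right)
  have "card K \<noteq> p ^ k"
    using proper card card_subset_eq[OF fin subgroup.subset[OF K]] by metis
  then have "p dvd card ?E"
    using lagrange i by (cases i) auto
  have action: "group_action (G\<lparr>carrier := K\<rparr>) ?E ?\<phi>"
    using group_action.induced_action[OF lcosets_left_mult_action[OF K] K] .
  have "{R \<in> ?E. \<forall>h \<in> carrier (G\<lparr>carrier := K\<rparr>). ?\<phi> h R = R} = ?F"
    by auto
  then have "[card ?F = card ?E] (mod p)"
    using group_action.p_group_card_fixed_points_cong[OF action _ p, of j] fin j
    by (simp add: order_def LCOSETS_def)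
  with \<open>p dvd card ?E\<close> have "p dvd card ?F"
    by (simp add: cong_dvd_iff)
  moreover have "K \<in> ?F"
    using lcos_mult_one[OF subgroup.subset[OF K]] K
    unfolding LCOSETS_def by (force simp: coset_join3 subgroup.mem_carrier)
  moreover have "?F \<noteq> {K}"
    using \<open>p dvd card ?F\<close> p by (auto simp: not_prime_1)
  ultimately show ?thesis
    by blast
qed

lemma (in group) p_group_normalizer_exceeds_subgroup:
  assumes fin: "finite (carrier G)" and p: "Factorial_Ring.prime p"
    and card: "card (carrier G) = p ^ k"
    and K: "subgroup K G" and proper: "K \<noteq> carrier G"
  shows "\<exists>g \<in> carrier G - K. \<forall>h \<in> K. g \<otimes> h \<otimes> inv g \<in> K"
proof -
  obtain a where a: "a \<in> carrier G" "a <# K \<noteq> K" "\<forall>h \<in> K. h <# (a <# K) = a <# K"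
    using p_group_fixed_lcoset[OF assms] unfolding LCOSETS_def by blast
  have "inv a \<notin> K"
    using a K subgroup.m_inv_closed[OF K, of "inv a"] by (auto simp: coset_join3)
  moreover have "inv a \<otimes> h \<otimes> inv (inv a) \<in> K" if h: "h \<in> K" for h
  proof -
    have hG: "h \<in> carrier G"
      using subgroup.mem_carrier[OF K h] .
    have "h \<otimes> a \<in> h <# (a <# K)"
      using a hG K lcos_self[of "h \<otimes> a" K] by (simp add: lcos_m_assoc subgroup.subset)
    then have "h \<otimes> a \<in> a <# K"
      using a(3) h by simp
    then have "inv a \<otimes> (h \<otimes> a) \<in> K"
      using subgroup.lcos_module_imp[OF K is_group a(1)] by blast
    then show ?thesis
      using a hG by (simp add: m_assoc)
  qed
  ultimately show ?thesis
    using a(1) by blast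
qed

context group
begin

lemma inv_mult_cancel_left [simp]:
  "x \<in> carrier G \<Longrightarrow> y \<in> carrier G \<Longrightarrow> inv x \<otimes> (x \<otimes> y) = y"
  by (simp add: m_assoc[symmetric])

lemma mult_inv_cancel_left [simp]:
  "x \<in> carrier G \<Longrightarrow> y \<in> carrier G \<Longrightarrow> x \<otimes> (inv x \<otimes> y) = y"
  by (simp add: m_assoc[symmetric])

lemma nat_pow_two: "a \<in> carrier G \<Longrightarrow> a [^] (2::nat) = a \<otimes> a"
  by (simp add: numeral_2_eq_2)

lemma subgroup_nat_pow_closed:
  assumes "subgroup H G" "h \<in> H"
  shows "h [^] (n::nat) \<in> H"
  using subgroup_int_pow_closed[OF assms, of "int n"] by (simp add: int_pow_int)

lemma mult_notin_subgroup:
  assumes "subgroup H G" "c \<in> H" "y \<in> carrier G" "y \<notin> H"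
  shows "c \<otimes> y \<notin> H"
proof
  assume "c \<otimes> y \<in> H"
  then have "inv c \<otimes> (c \<otimes> y) \<in> H"
    using assms by (simp add: subgroup.m_closed subgroup.m_inv_closed)
  then show False
    using assms subgroup.mem_carrier by fastforce
qed

lemma finite_subgroupI:
  assumes fin: "finite (carrier G)" and sub: "H \<subseteq> carrier G" and one: "\<one> \<in> H"
    and mult: "\<And>a b. a \<in> H \<Longrightarrow> b \<in> H \<Longrightarrow> a \<otimes> b \<in> H"
  shows "subgroup H G"
proof (rule subgroupI)
  fix a assume a: "a \<in> H"
  then have aG: "a \<in> carrier G"
    using sub by blast
  have pow: "a [^] (n::nat) \<in> H" for n
    by (induction n) (use one mult a in auto)
  have "a [^] (ord a - 1) \<otimes> a = a [^] ord a"
    using ord_ge_1[OF fin aG] by (simp flip: nat_pow_Suc)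
  then have "a [^] (ord a - 1) \<otimes> a = \<one>"
    using aG by simp
  then have "inv a = a [^] (ord a - 1)"
    using aG by (simp add: inv_equality)
  then show "inv a \<in> H"
    using pow by simp
qed (use sub one mult in auto)

lemma generate_singleton_eq_range:
  assumes "g \<in> carrier G"
  shows "generate G {g} = range (\<lambda>n::int. g [^] n)"
  using generate_pow[OF assms] by auto

lemma generate_involution:
  assumes g: "g \<in> carrier G" and gg: "g \<otimes> g = \<one>"
  shows "generate G {g} \<subseteq> {\<one>, g}"
proof -
  have "inv g = g"
    using inv_equality[OF gg g g] .
  then have "subgroup {\<one>, g} G"
    using g gg by (intro subgroupI) auto
  then show ?thesis
    by (intro generate_subgroup_incl) auto
qed

lemma pow_eq_pow_iff_cong:
  assumes "x \<in> carrier G"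
  shows "x [^] (m::nat) = x [^] (n::nat) \<longleftrightarrow> [m = n] (mod ord x)"
proof -
  have "x [^] m = x [^] n \<longleftrightarrow> x [^] int m = x [^] int n"
    by (simp add: int_pow_int)
  also have "\<dots> \<longleftrightarrow> [int n = int m] (mod int (ord x))"
    using int_pow_eq[OF assms] by (simp add: cong_iff_dvd_diff)
  finally show ?thesis
    by (simp add: cong_int_iff cong_sym_eq)
qed

lemma int_pow_mod_ord:
  assumes "x \<in> carrier G"
  shows "x [^] (a mod int (ord x)) = x [^] a"
  using int_pow_eq[OF assms] by (simp add: minus_mod_eq_mult_div)

lemma pow_prime_power_leaves_set:
  fixes p :: nat
  assumes g: "g \<in> carrier G" "g \<notin> H" and gH: "g [^] (p ^ a) \<in> H"
  shows "\<exists>j. g [^] (p ^ j) \<notin> H \<and> (g [^] (p ^ j)) [^] p \<in> H"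
proof -
  have "g [^] (p ^ 0) \<notin> H"
    using g by simp
  then obtain j where "g [^] (p ^ j) \<notin> H" "g [^] (p ^ Suc j) \<in> H"
    using ex_least_nat_less[of "\<lambda>j. g [^] (p ^ j) \<in> H" a] gH by blast
  moreover have "g [^] (p ^ Suc j) = (g [^] (p ^ j)) [^] p"
    using g by (simp add: nat_pow_pow mult.commute)
  ultimately show ?thesis
    by auto
qed

lemma conjugation_group_hom:
  assumes g: "g \<in> carrier G"
  shows "group_hom G G (\<lambda>a. g \<otimes> a \<otimes> inv g)"
proof -
  have "g \<otimes> (a \<otimes> b) \<otimes> inv g = (g \<otimes> a \<otimes> inv g) \<otimes> (g \<otimes> b \<otimes> inv g)"
    if "a \<in> carrier G" "b \<in> carrier G" for a b
    using that g by (simp add: m_assoc)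
  then have "(\<lambda>a. g \<otimes> a \<otimes> inv g) \<in> hom G G"
    using g by (intro homI) auto
  then show ?thesis
    by (simp add: group_hom_def group_hom_axioms_def is_group)
qed

lemma conj_nat_pow:
  assumes "g \<in> carrier G" "a \<in> carrier G"
  shows "g \<otimes> a [^] (n::nat) \<otimes> inv g = (g \<otimes> a \<otimes> inv g) [^] n"
  using group_hom.hom_nat_pow[OF conjugation_group_hom[OF assms(1)] assms(2)] by simp

lemma conj_int_pow:
  assumes "g \<in> carrier G" "a \<in> carrier G"
  shows "g \<otimes> a [^] (n::int) \<otimes> inv g = (g \<otimes> a \<otimes> inv g) [^] n"
  using group_hom.hom_int_pow[OF conjugation_group_hom[OF assms(1)] assms(2)] by simp

lemma conj_pow_eq_pow_pow:
  fixes r :: nat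
  assumes h: "h \<in> carrier G" and x: "x \<in> carrier G" and r: "h \<otimes> x \<otimes> inv h = x [^] r"
  shows "h [^] n \<otimes> x \<otimes> inv (h [^] n) = x [^] (r ^ n)"
proof (induction n)
  case 0
  then show ?case
    using x by simp
next
  case (Suc n)
  have "h [^] Suc n \<otimes> x \<otimes> inv (h [^] Suc n) = h \<otimes> (h [^] n \<otimes> x \<otimes> inv (h [^] n)) \<otimes> inv h"
    using h x by (simp only: nat_pow_Suc2[OF h]) (simp add: inv_mult_group m_assoc)
  also have "\<dots> = (h \<otimes> x \<otimes> inv h) [^] (r ^ n)"
    using Suc.IH conj_nat_pow[OF h x] by simp
  also have "\<dots> = x [^] (r ^ Suc n)"
    using r x by (simp add: nat_pow_pow)
  finally show ?case .
qed

lemma mult_pow_eq_pow_sum: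
  fixes r :: nat
  assumes h: "h \<in> carrier G" and x: "x \<in> carrier G" and r: "h \<otimes> x \<otimes> inv h = x [^] r"
  shows "(x \<otimes> h) [^] n = x [^] (\<Sum>i<n. r ^ i) \<otimes> h [^] n"
proof (induction n)
  case 0
  then show ?case
    by simp
next
  case (Suc n)
  let ?s = "\<Sum>i<n. r ^ i"
  have "(x \<otimes> h) [^] Suc n = x \<otimes> (h \<otimes> x [^] ?s \<otimes> inv h) \<otimes> (h \<otimes> h [^] n)"
    using Suc.IH h x by (simp only: nat_pow_Suc2[OF m_closed[OF x h]]) (simp add: m_assoc)
  also have "\<dots> = x \<otimes> x [^] (r * ?s) \<otimes> (h \<otimes> h [^] n)"
    using conj_nat_pow[OF h x] r x h by (simp add: nat_pow_pow)
  also have "x \<otimes> x [^] (r * ?s) = x [^] (1 + r * ?s)"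
    using x nat_pow_mult[of x 1 "r * ?s"] by simp
  also have "1 + r * ?s = (\<Sum>i<Suc n. r ^ i)"
    unfolding sum.lessThan_Suc_shift by (simp add: sum_distrib_left)
  also have "h \<otimes> h [^] n = h [^] Suc n"
    by (rule nat_pow_Suc2[OF h, symmetric])
  finally show ?case .
qed

end

section \<open>Cyclic subgroups and the enhanced power graph\<close>

context group
begin

lemma subgroup_of_cyclic_is_cyclic:
  assumes fin: "finite (carrier G)" and x: "x \<in> carrier G"
    and H: "subgroup H G" and sub: "H \<subseteq> generate G {x}"
  shows "\<exists>g \<in> carrier G. H = generate G {g}"
proof -
  have genx: "generate G {x} = {x [^] k | k. k \<in> (UNIV :: nat set)}"
    using generate_pow_on_finite_carrier[OF fin x] .
  define d where "d = (LEAST n::nat. 0 < n \<and> x [^] n \<in> H)"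
  have "0 < ord x \<and> x [^] ord x \<in> H"
    using ord_ge_1[OF fin x] subgroup.one_closed[OF H] x by simp
  then have d: "0 < d \<and> x [^] d \<in> H"
    unfolding d_def by (rule LeastI)
  have d_least: "\<not> (0 < m \<and> x [^] m \<in> H)" if "m < d" for m
    using that not_less_Least unfolding d_def by blast
  have xd: "x [^] d \<in> carrier G"
    using x by simp
  show ?thesis
  proof (intro bexI[OF _ xd] equalityI)
    show "generate G {x [^] d} \<subseteq> H"
      using generate_subgroup_incl[of "{x [^] d}" H] d H by simp
    show "H \<subseteq> generate G {x [^] d}"
    proof
      fix h assume h: "h \<in> H"
      then obtain n where n: "h = x [^] (n::nat)"
        using sub genx by auto
      have split: "x [^] n = (x [^] d) [^] (n div d) \<otimes> x [^] (n mod d)"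
        using x by (simp add: nat_pow_pow nat_pow_mult)
      have "(x [^] d) [^] (n div d) \<in> H"
        using d H by (simp add: subgroup_nat_pow_closed)
      then have "inv ((x [^] d) [^] (n div d)) \<otimes> x [^] n \<in> H"
        using h n H by (simp add: subgroup.m_closed subgroup.m_inv_closed)
      then have "x [^] (n mod d) \<in> H"
        using split x by (simp add: m_assoc[symmetric])
      then have "n mod d = 0"
        using d_least[of "n mod d"] d by auto
      then have "h = (x [^] d) [^] (n div d)"
        using n split x by simp
      then show "h \<in> generate G {x [^] d}"
        using generate_pow_on_finite_carrier[OF fin xd] by auto
    qed
  qed
qed

lemma cyclic_subgroup_generated_iff:
  assumes fin: "finite (carrier G)" and A: "A \<subseteq> carrier G"
  shows "cyclic_group (subgroup_generated G A) \<longleftrightarrow> (\<exists>g \<in> carrier G. A \<subseteq> generate G {g})"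
proof -
  let ?S = "subgroup_generated G A"
  have carrier_S: "carrier ?S = generate G A"
    using A by (simp add: carrier_subgroup_generated Int_absorb1)
  have S_eq: "carrier ?S = range (\<lambda>n::int. g [^]\<^bsub>?S\<^esub> n) \<longleftrightarrow> generate G A = generate G {g}"
    if g: "g \<in> carrier ?S" for g
  proof -
    have "g \<in> carrier G"
      using g carrier_S generate_in_carrier[OF A] by blast
    then show ?thesis
      using carrier_S int_pow_subgroup_generated[OF g] generate_singleton_eq_range by simp
  qed
  show ?thesis
  proof
    assume "cyclic_group ?S"
    then obtain g where g: "g \<in> carrier ?S" "carrier ?S = range (\<lambda>n::int. g [^]\<^bsub>?S\<^esub> n)"
      using group.cyclic_group[OF group_subgroup_generated] by blast
    then have "A \<subseteq> generate G {g}"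
      using S_eq generate.incl[of _ A G] by blast
    moreover have "g \<in> carrier G"
      using g(1) carrier_S generate_in_carrier[OF A] by blast
    ultimately show "\<exists>g \<in> carrier G. A \<subseteq> generate G {g}"
      by blast
  next
    assume "\<exists>g \<in> carrier G. A \<subseteq> generate G {g}"
    then obtain g where g: "g \<in> carrier G" "A \<subseteq> generate G {g}"
      by blast
    have "generate G A \<subseteq> generate G {g}"
      using g generate_subgroup_incl generate_is_subgroup by auto
    then obtain h where h: "h \<in> carrier G" "generate G A = generate G {h}"
      using subgroup_of_cyclic_is_cyclic[OF fin g(1) generate_is_subgroup[OF A]] by blast
    have "h \<in> carrier ?S"
      using carrier_S h(2) generate.incl by fastforce
    then show "cyclic_group ?S"
      using S_eq h(2) group.cyclic_group[OF group_subgroup_generated] by blast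
  qed
qed

lemma enh_nbhd_iff:
  assumes fin: "finite (carrier G)" and a: "a \<in> carrier G"
  shows "b \<in> enh_nbhd G a \<longleftrightarrow>
           b \<in> carrier G \<and> (\<exists>g \<in> carrier G. a \<in> generate G {g} \<and> b \<in> generate G {g})"
  unfolding enh_nbhd_def using cyclic_subgroup_generated_iff[OF fin, of "{a, b}"] a by auto

lemma enh_nbhd_subset_carrier: "enh_nbhd G a \<subseteq> carrier G"
  unfolding enh_nbhd_def by auto

lemma generate_subset_enh_nbhd:
  assumes fin: "finite (carrier G)" and a: "a \<in> carrier G"
  shows "generate G {a} \<subseteq> enh_nbhd G a"
  using enh_nbhd_iff[OF fin a] a generate.incl[of a "{a}" G] generate_in_carrier[of "{a}"] by blast

lemma card_enh_nbhd_le_n_G: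
  assumes "finite (carrier G)" "a \<in> carrier G" "a \<noteq> \<one>"
  shows "card (enh_nbhd G a) \<le> n_G G"
  unfolding n_G_def using assms by (intro Max_ge) auto

lemma n_G_le:
  assumes fin: "finite (carrier G)" and nontrivial: "carrier G \<noteq> {\<one>}"
    and bound: "\<And>a. a \<in> carrier G \<Longrightarrow> a \<noteq> \<one> \<Longrightarrow> card (enh_nbhd G a) \<le> B"
  shows "n_G G \<le> B"
proof -
  have "carrier G - {\<one>} \<noteq> {}"
    using nontrivial by blast
  then show ?thesis
    unfolding n_G_def using fin bound by (subst Max_le_iff) auto
qed

end

section \<open>The exponent\<close>

context group
begin

lemma ord_dvd_group_exp: "a \<in> carrier G \<Longrightarrow> ord a dvd group_exp G"
  unfolding group_exp_def by (rule dvd_Lcm) simp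

lemma group_exp_pos:
  assumes fin: "finite (carrier G)"
  shows "0 < group_exp G"
proof -
  have "0 \<notin> ord ` carrier G"
    using ord_ge_1[OF fin] by fastforce
  moreover have "finite (ord ` carrier G)"
    using fin by simp
  ultimately show ?thesis
    unfolding group_exp_def by (intro gr0I) (simp add: Lcm_0_iff)
qed

lemma group_exp_eq_one_imp_trivial:
  assumes "group_exp G = 1"
  shows "carrier G = {\<one>}"
  using ord_dvd_group_exp assms ord_eq_1 by auto

lemma p_group_ord:
  assumes p: "Factorial_Ring.prime p" and card: "card (carrier G) = p ^ k" and a: "a \<in> carrier G"
  shows "\<exists>j. ord a = p ^ j"
  using ord_dvd_group_order[OF a] card divides_primepow_nat[OF p] by (auto simp: order_def)

lemma p_group_exp_attained:
  assumes fin: "finite (carrier G)" and p: "Factorial_Ring.prime p"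
    and card: "card (carrier G) = p ^ k"
  shows "\<exists>x \<in> carrier G. ord x = group_exp G"
proof -
  have fin_ord: "finite (ord ` carrier G)"
    using fin by (rule finite_imageI)
  have "Max (ord ` carrier G) \<in> ord ` carrier G"
    using fin_ord one_closed by (intro Max_in) blast+
  then obtain x where x: "Max (ord ` carrier G) = ord x" "x \<in> carrier G"
    by (rule imageE)
  have ord_le: "ord a \<le> ord x" if "a \<in> carrier G" for a
    unfolding x(1)[symmetric] using fin_ord that by (intro Max_ge) auto
  obtain j where j: "ord x = p ^ j"
    using p_group_ord[OF p card x(2)] by blast
  have "ord a dvd ord x" if a: "a \<in> carrier G" for a
  proof -
    obtain i where i: "ord a = p ^ i"
      using p_group_ord[OF p card a] by blast
    then have "p ^ i \<le> p ^ j"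
      using ord_le[OF a] j by simp
    then have "i \<le> j"
      by (rule power_le_imp_le_exp[OF prime_gt_1_nat[OF p]])
    then show ?thesis
      using i j by (simp add: le_imp_power_dvd)
  qed
  then have "group_exp G dvd ord x"
    unfolding group_exp_def by (intro Lcm_least) auto
  then have "group_exp G = ord x"
    using ord_dvd_group_exp[OF x(2)] by (simp add: dvd_antisym)
  then show ?thesis
    using x(2) by auto
qed

lemma group_exp_le_n_G:
  assumes fin: "finite (carrier G)" and p: "Factorial_Ring.prime p"
    and card: "card (carrier G) = p ^ k" and nontrivial: "carrier G \<noteq> {\<one>}"
  shows "group_exp G \<le> n_G G"
proof -
  obtain x where x: "x \<in> carrier G" "ord x = group_exp G"
    using p_group_exp_attained[OF fin p card] by blast
  have "x \<noteq> \<one>"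
    using x nontrivial group_exp_eq_one_imp_trivial by auto
  have "ord x = card (generate G {x})"
    using generate_pow_card[OF x(1)] .
  also have "\<dots> \<le> card (enh_nbhd G x)"
    using generate_subset_enh_nbhd[OF fin x(1)] enh_nbhd_subset_carrier
    by (intro card_mono) (auto intro: finite_subset[OF _ fin])
  also have "\<dots> \<le> n_G G"
    using card_enh_nbhd_le_n_G[OF fin x(1) \<open>x \<noteq> \<one>\<close>] .
  finally show ?thesis
    using x(2) by simp
qed

lemma n_G_le_order:
  assumes fin: "finite (carrier G)" and nontrivial: "carrier G \<noteq> {\<one>}"
  shows "n_G G \<le> order G"
  unfolding order_def using enh_nbhd_subset_carrier fin
  by (intro n_G_le[OF fin nontrivial] card_mono)

lemma group_exp_cyclic:
  assumes fin: "finite (carrier G)" and cyclic: "cyclic_group G"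
  shows "group_exp G = order G"
proof -
  obtain g where g: "g \<in> carrier G" "carrier G = range (\<lambda>n::int. g [^] n)"
    using cyclic cyclic_group by blast
  have "ord g = order G"
    using generate_pow_card[OF g(1)] g generate_singleton_eq_range by (simp add: order_def)
  moreover have "group_exp G dvd order G"
    unfolding group_exp_def by (intro Lcm_least) (auto simp: ord_dvd_group_order)
  ultimately show ?thesis
    using ord_dvd_group_exp[OF g(1)] by (simp add: dvd_antisym)
qed

lemma n_G_le_prime_group_exp:
  assumes fin: "finite (carrier G)" and nontrivial: "carrier G \<noteq> {\<one>}"
    and p: "Factorial_Ring.prime p" and exp: "group_exp G = p"
  shows "n_G G \<le> p"
proof (rule n_G_le[OF fin nontrivial])
  have ord_le: "ord g \<le> p" if "g \<in> carrier G" for g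
    using ord_dvd_group_exp[OF that] exp p by (simp add: dvd_imp_le prime_gt_0_nat)
  fix a assume a: "a \<in> carrier G" "a \<noteq> \<one>"
  have "ord a dvd p" "ord a \<noteq> 1"
    using ord_dvd_group_exp[OF a(1)] exp ord_eq_1[OF a(1)] a(2) by auto
  then have ord_a: "ord a = p"
    using p by (auto simp: prime_nat_iff)
  have "enh_nbhd G a \<subseteq> generate G {a}"
  proof
    fix b assume "b \<in> enh_nbhd G a"
    then obtain g where g: "g \<in> carrier G" "a \<in> generate G {g}" "b \<in> generate G {g}"
      using enh_nbhd_iff[OF fin a(1)] by blast
    have sub: "generate G {a} \<subseteq> generate G {g}"
      using g generate_subgroup_incl generate_is_subgroup by auto
    moreover have "card (generate G {g}) \<le> card (generate G {a})"
      using ord_le[OF g(1)] ord_a generate_pow_card[OF g(1)] generate_pow_card[OF a(1)] by simp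
    ultimately have "generate G {a} = generate G {g}"
      using fin g(1) generate_in_carrier[of "{g}"]
      by (intro card_seteq) (auto intro: finite_subset[OF _ fin])
    then show "b \<in> generate G {a}"
      using g(3) by simp
  qed
  then have "card (enh_nbhd G a) \<le> card (generate G {a})"
    using a(1) generate_in_carrier[of "{a}"] by (intro card_mono) (auto intro: finite_subset[OF _ fin])
  then show "card (enh_nbhd G a) \<le> p"
    using generate_pow_card[OF a(1)] ord_a by simp
qed

end

section \<open>Dihedral groups\<close>

definition dihedral_generators :: "('a, 'b) monoid_scheme \<Rightarrow> 'a \<Rightarrow> 'a \<Rightarrow> bool" where
  "dihedral_generators G x y \<longleftrightarrow>
     x \<in> carrier G \<and> y \<in> carrier G \<and> y \<notin> generate G {x} \<and>
     y \<otimes>\<^bsub>G\<^esub> y = \<one>\<^bsub>G\<^esub> \<and> y \<otimes>\<^bsub>G\<^esub> x \<otimes>\<^bsub>G\<^esub> inv\<^bsub>G\<^esub> y = inv\<^bsub>G\<^esub> x \<and>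
     carrier G = generate G {x} \<union> (generate G {x} #>\<^bsub>G\<^esub> y)"

definition dihedral_word :: "('a, 'b) monoid_scheme \<Rightarrow> 'a \<Rightarrow> 'a \<Rightarrow> int \<times> bool \<Rightarrow> 'a" where
  "dihedral_word G x y = (\<lambda>(a, s). x [^]\<^bsub>G\<^esub> a \<otimes>\<^bsub>G\<^esub> (if s then y else \<one>\<^bsub>G\<^esub>))"

lemma dihedral_group_mult:
  "(a, s) \<otimes>\<^bsub>dihedral_group n\<^esub> (b, t) = ((if s then a - b else a + b) mod int n, s \<noteq> t)"
  by (simp add: dihedral_group_def)

lemma carrier_dihedral_group: "carrier (dihedral_group n) = {0..<int n} \<times> UNIV"
  by (simp add: dihedral_group_def)

lemma one_dihedral_group: "\<one>\<^bsub>dihedral_group n\<^esub> = (0, False)"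
  by (simp add: dihedral_group_def)

lemma group_dihedral_group:
  assumes "0 < n"
  shows "group (dihedral_group n)"
proof (rule groupI)
  fix u v w
  assume "u \<in> carrier (dihedral_group n)" "v \<in> carrier (dihedral_group n)"
    "w \<in> carrier (dihedral_group n)"
  obtain a s b t c r where "u = (a, s)" "v = (b, t)" "w = (c, r)"
    by (cases u, cases v, cases w)
  then show "u \<otimes>\<^bsub>dihedral_group n\<^esub> v \<otimes>\<^bsub>dihedral_group n\<^esub> w =
      u \<otimes>\<^bsub>dihedral_group n\<^esub> (v \<otimes>\<^bsub>dihedral_group n\<^esub> w)"
    by (cases s; cases t; cases r) (simp_all add: dihedral_group_mult mod_simps algebra_simps)
next
  fix u assume u: "u \<in> carrier (dihedral_group n)"
  obtain a s where as: "u = (a, s)"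
    by (cases u)
  then have a: "0 \<le> a" "a < int n"
    using u by (auto simp: carrier_dihedral_group)
  show "\<one>\<^bsub>dihedral_group n\<^esub> \<otimes>\<^bsub>dihedral_group n\<^esub> u = u"
    using as a by (simp add: one_dihedral_group dihedral_group_mult)
  let ?v = "if s then (a, True) else (- a mod int n, False)"
  have "?v \<in> carrier (dihedral_group n)" "?v \<otimes>\<^bsub>dihedral_group n\<^esub> u = \<one>\<^bsub>dihedral_group n\<^esub>"
    using as a assms by (auto simp: carrier_dihedral_group dihedral_group_mult one_dihedral_group mod_simps)
  then show "\<exists>v \<in> carrier (dihedral_group n). v \<otimes>\<^bsub>dihedral_group n\<^esub> u = \<one>\<^bsub>dihedral_group n\<^esub>"
    by blast
qed (use assms in \<open>auto simp: carrier_dihedral_group dihedral_group_mult one_dihedral_group\<close>)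

lemma dihedral_group_rotation_pow:
  assumes "0 < n"
  shows "(1, False) [^]\<^bsub>dihedral_group n\<^esub> (i::nat) = (int i mod int n, False)"
proof -
  interpret D: group "dihedral_group n"
    using group_dihedral_group[OF assms] .
  show ?thesis
    by (induction i) (simp_all add: one_dihedral_group dihedral_group_mult mod_simps add.commute)
qed

lemma generate_dihedral_group_rotation:
  assumes n: "2 \<le> n"
  shows "generate (dihedral_group n) {(1, False)} = {0..<int n} \<times> {False}"
proof -
  let ?D = "dihedral_group n" and ?x = "(1::int, False)"
  interpret D: group ?D
    using group_dihedral_group n by simp
  have pow: "?x [^]\<^bsub>?D\<^esub> (i::nat) = (int i mod int n, False)" for i
    using dihedral_group_rotation_pow n by simp
  have "generate ?D {?x} = {?x [^]\<^bsub>?D\<^esub> i | i::nat. True}"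
    using D.generate_pow_on_finite_carrier[of ?x] n
    by (simp add: carrier_dihedral_group)
  also have "\<dots> = {0..<int n} \<times> {False}"
  proof (intro equalityI subsetI)
    fix u assume "u \<in> {0..<int n} \<times> {False}"
    then obtain a where "u = (a, False)" "0 \<le> a" "a < int n"
      by auto
    then have "u = ?x [^]\<^bsub>?D\<^esub> nat a"
      using pow by simp
    then show "u \<in> {?x [^]\<^bsub>?D\<^esub> i | i::nat. True}"
      by blast
  qed (use n pow in auto)
  finally show ?thesis .
qed

lemma dihedral_group_generators:
  assumes n: "2 \<le> n"
  shows "dihedral_generators (dihedral_group n) (1, False) (0, True)"
    and "group.ord (dihedral_group n) (1, False) = n"
proof -
  let ?D = "dihedral_group n" and ?x = "(1::int, False)" and ?y = "(0::int, True)"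
  interpret D: group ?D
    using group_dihedral_group n by simp
  have x: "?x \<in> carrier ?D" and y: "?y \<in> carrier ?D"
    using n by (auto simp: carrier_dihedral_group)
  have coset: "{0..<int n} \<times> {False} #>\<^bsub>?D\<^esub> ?y = {0..<int n} \<times> {True}"
    unfolding r_coset_def by (force simp: dihedral_group_mult)
  have inv_y: "inv\<^bsub>?D\<^esub> ?y = ?y"
    using y by (intro D.inv_equality) (simp_all add: dihedral_group_mult one_dihedral_group)
  have inv_x: "inv\<^bsub>?D\<^esub> ?x = (int n - 1, False)"
    using x n by (intro D.inv_equality) (simp_all add: dihedral_group_mult one_dihedral_group carrier_dihedral_group)
  have "carrier ?D = {0..<int n} \<times> {False} \<union> {0..<int n} \<times> {True}"
    unfolding carrier_dihedral_group by (auto intro: bool.exhaust)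
  then show "dihedral_generators ?D ?x ?y"
    unfolding dihedral_generators_def using x y n
    by (simp add: generate_dihedral_group_rotation coset inv_x inv_y dihedral_group_mult
        one_dihedral_group zmod_minus1)
  have "?x [^]\<^bsub>?D\<^esub> m = \<one>\<^bsub>?D\<^esub> \<longleftrightarrow> n dvd m" for m
    using dihedral_group_rotation_pow n
    by (auto simp: one_dihedral_group dvd_eq_mod_eq_0 simp flip: of_nat_mod)
  then show "D.ord ?x = n"
    using D.ord_unique[OF x] by blast
qed

lemma iso_ord:
  assumes G: "group G" and H: "group H" and \<phi>: "\<phi> \<in> iso G H" and x: "x \<in> carrier G"
  shows "group.ord H (\<phi> x) = group.ord G x"
proof -
  interpret \<phi>: group_hom G H \<phi>
    using G H \<phi> by (simp add: group_hom_def group_hom_axioms_def iso_def)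
  have inj: "inj_on \<phi> (carrier G)"
    using \<phi> by (simp add: iso_def bij_betw_def)
  have "\<phi> x [^]\<^bsub>H\<^esub> n = \<one>\<^bsub>H\<^esub> \<longleftrightarrow> group.ord G x dvd n" for n :: nat
  proof -
    have "\<phi> x [^]\<^bsub>H\<^esub> n = \<one>\<^bsub>H\<^esub> \<longleftrightarrow> \<phi> (x [^]\<^bsub>G\<^esub> n) = \<phi> \<one>\<^bsub>G\<^esub>"
      using x by (simp add: \<phi>.hom_nat_pow)
    also have "\<dots> \<longleftrightarrow> x [^]\<^bsub>G\<^esub> n = \<one>\<^bsub>G\<^esub>"
      by (rule inj_on_eq_iff[OF inj]) (use x in simp_all)
    finally show ?thesis
      using group.pow_eq_id[OF G x] by simp
  qed
  then show ?thesis
    using group.ord_unique[OF H] x by simp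
qed

lemma dihedral_generators_iso:
  assumes G: "group G" and H: "group H" and \<phi>: "\<phi> \<in> iso G H"
    and gens: "dihedral_generators G x y"
  shows "dihedral_generators H (\<phi> x) (\<phi> y)"
proof -
  interpret \<phi>: group_hom G H \<phi>
    using G H \<phi> by (simp add: group_hom_def group_hom_axioms_def iso_def)
  let ?C = "generate G {x}"
  have x: "x \<in> carrier G" and y: "y \<in> carrier G" and yC: "y \<notin> ?C"
    and yy: "y \<otimes>\<^bsub>G\<^esub> y = \<one>\<^bsub>G\<^esub>" and yx: "y \<otimes>\<^bsub>G\<^esub> x \<otimes>\<^bsub>G\<^esub> inv\<^bsub>G\<^esub> y = inv\<^bsub>G\<^esub> x"
    and carrier: "carrier G = ?C \<union> (?C #>\<^bsub>G\<^esub> y)"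
    using gens unfolding dihedral_generators_def by auto
  have inj: "inj_on \<phi> (carrier G)" and surj: "\<phi> ` carrier G = carrier H"
    using \<phi> by (auto simp: iso_def bij_betw_def)
  have C: "?C \<subseteq> carrier G"
    using x \<phi>.G.generate_in_carrier[of "{x}"] by blast
  have gen: "generate H {\<phi> x} = \<phi> ` ?C"
    using \<phi>.generate_img[of "{x}"] x by simp
  have coset: "\<phi> ` (?C #>\<^bsub>G\<^esub> y) = \<phi> ` ?C #>\<^bsub>H\<^esub> \<phi> y"
    using C y unfolding r_coset_def by force
  have "\<phi> y \<notin> \<phi> ` ?C"
    using inj C y yC by (auto dest: inj_onD)
  moreover have "\<phi> y \<otimes>\<^bsub>H\<^esub> \<phi> y = \<one>\<^bsub>H\<^esub>"
    using y yy by (simp flip: \<phi>.hom_mult)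
  moreover have "\<phi> y \<otimes>\<^bsub>H\<^esub> \<phi> x \<otimes>\<^bsub>H\<^esub> inv\<^bsub>H\<^esub> \<phi> y = inv\<^bsub>H\<^esub> \<phi> x"
    using x y yx by (simp flip: \<phi>.hom_mult \<phi>.hom_inv)
  moreover have "carrier H = \<phi> ` ?C \<union> (\<phi> ` ?C #>\<^bsub>H\<^esub> \<phi> y)"
    using surj carrier coset by (metis image_Un)
  moreover have "\<phi> x \<in> carrier H" "\<phi> y \<in> carrier H"
    using x y by simp_all
  ultimately show ?thesis
    unfolding dihedral_generators_def gen by blast
qed

context group
begin

lemma iso_dihedral_group_imp_generators:
  assumes n: "2 \<le> n" and iso: "G \<cong> dihedral_group n"
  shows "\<exists>x y. dihedral_generators G x y \<and> ord x = n"
proof -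
  have D: "group (dihedral_group n)"
    using group_dihedral_group n by simp
  obtain \<phi> where \<phi>: "\<phi> \<in> iso (dihedral_group n) G"
    using iso_sym[OF iso] unfolding is_iso_def by blast
  have "(1, False) \<in> carrier (dihedral_group n)"
    using n by (simp add: carrier_dihedral_group)
  then have "dihedral_generators G (\<phi> (1, False)) (\<phi> (0, True)) \<and> ord (\<phi> (1, False)) = n"
    using dihedral_generators_iso[OF D is_group \<phi>] iso_ord[OF D is_group \<phi>]
      dihedral_group_generators[OF n] by simp
  then show ?thesis
    by blast
qed

lemma dihedral_generators_conj_pow:
  assumes gens: "dihedral_generators G x y"
  shows "y \<otimes> x [^] (b::int) = x [^] (- b) \<otimes> y"
proof -
  have x: "x \<in> carrier G" and y: "y \<in> carrier G" and yx: "y \<otimes> x \<otimes> inv y = inv x"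
    using gens unfolding dihedral_generators_def by auto
  have "y \<otimes> x [^] b \<otimes> inv y = x [^] (- b)"
    using conj_int_pow[OF y x] yx x by (simp add: int_pow_inv int_pow_neg)
  then show ?thesis
    using x y by (simp add: inv_solve_right')
qed

lemma card_carrier_dihedral_generators:
  assumes gens: "dihedral_generators G x y" and ord: "0 < ord x"
  shows "card (carrier G) = 2 * ord x"
proof -
  let ?C = "generate G {x}"
  have x: "x \<in> carrier G" and y: "y \<in> carrier G" and yC: "y \<notin> ?C"
    and carrier: "carrier G = ?C \<union> (?C #> y)"
    using gens unfolding dihedral_generators_def by auto
  have C_sub: "?C \<subseteq> carrier G"
    using x generate_in_carrier[of "{x}"] by blast
  have card_C: "card ?C = ord x"
    using generate_pow_card[OF x] by simp
  have card_coset: "card (?C #> y) = ord x"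
    using card_rcosets_equal[OF rcosetsI[OF C_sub y] C_sub] card_C by simp
  have "?C \<inter> (?C #> y) = {}"
    using mult_notin_subgroup[OF generate_is_subgroup[of "{x}"] _ y yC] x
    unfolding r_coset_def by auto
  then show ?thesis
    using card_C card_coset ord unfolding carrier
    by (subst card_Un_disjoint) (auto intro: card_ge_0_finite)
qed

lemma dihedral_word_hom:
  assumes gens: "dihedral_generators G x y" and n: "ord x = n"
  shows "dihedral_word G x y \<in> hom (dihedral_group n) G"
proof -
  have x: "x \<in> carrier G" and y: "y \<in> carrier G" and yy: "y \<otimes> y = \<one>"
    using gens unfolding dihedral_generators_def by auto
  have conj_pow: "y \<otimes> x [^] b = x [^] (- b) \<otimes> y" for b :: int
    using dihedral_generators_conj_pow[OF gens] .
  have conj_pow': "y \<otimes> (x [^] b \<otimes> y) = x [^] (- b)" for b :: int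
    using conj_pow[of b] x y yy by (simp flip: m_assoc) (simp add: m_assoc)
  show ?thesis
  proof (rule homI)
    fix u :: "int \<times> bool"
    show "dihedral_word G x y u \<in> carrier G"
      using x y by (cases u) (simp add: dihedral_word_def)
  next
    fix u v :: "int \<times> bool"
    obtain a s b t where uv: "u = (a, s)" "v = (b, t)"
      by (cases u, cases v)
    have "x [^] (a - b) = x [^] a \<otimes> x [^] (- b)"
      using x int_pow_mult[OF x, of a "- b"] by simp
    then show "dihedral_word G x y (u \<otimes>\<^bsub>dihedral_group n\<^esub> v) =
        dihedral_word G x y u \<otimes> dihedral_word G x y v"
      unfolding uv using x y yy int_pow_mod_ord[OF x] n
      by (cases s; cases t) (simp_all add: dihedral_word_def dihedral_group_mult int_pow_mult
          m_assoc conj_pow[symmetric] conj_pow')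
  qed
qed

lemma dihedral_word_surj:
  assumes gens: "dihedral_generators G x y" and n: "ord x = n" "0 < n"
  shows "dihedral_word G x y ` carrier (dihedral_group n) = carrier G"
proof
  have x: "x \<in> carrier G" and carrier: "carrier G = generate G {x} \<union> (generate G {x} #> y)"
    using gens unfolding dihedral_generators_def by auto
  show "dihedral_word G x y ` carrier (dihedral_group n) \<subseteq> carrier G"
    using dihedral_word_hom[OF gens n(1)] by (auto simp: hom_def)
  have img: "x [^] a \<otimes> (if s then y else \<one>) \<in> dihedral_word G x y ` carrier (dihedral_group n)"
    for a :: int and s
  proof -
    have "(a mod int n, s) \<in> carrier (dihedral_group n)"
      using n by (simp add: carrier_dihedral_group)
    moreover have "dihedral_word G x y (a mod int n, s) = x [^] a \<otimes> (if s then y else \<one>)"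
      using int_pow_mod_ord[OF x] n by (simp add: dihedral_word_def)
    ultimately show ?thesis
      by force
  qed
  show "carrier G \<subseteq> dihedral_word G x y ` carrier (dihedral_group n)"
  proof
    fix g assume "g \<in> carrier G"
    then consider a where "g = x [^] (a :: int)" | a where "g = x [^] (a :: int) \<otimes> y"
      unfolding carrier generate_pow[OF x] r_coset_def by blast
    then show "g \<in> dihedral_word G x y ` carrier (dihedral_group n)"
      using img[of _ False] img[of _ True] x by cases auto
  qed
qed

lemma dihedral_generators_imp_iso:
  assumes gens: "dihedral_generators G x y" and n: "ord x = n" "2 \<le> n"
  shows "G \<cong> dihedral_group n"
proof -
  have n0: "0 < n"
    using n by simp
  have "card (carrier G) = card (carrier (dihedral_group n))"
    using card_carrier_dihedral_generators[OF gens] n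
    by (simp add: carrier_dihedral_group card_cartesian_product)
  then have "inj_on (dihedral_word G x y) (carrier (dihedral_group n))"
    using dihedral_word_surj[OF gens n(1) n0]
    by (intro eq_card_imp_inj_on) (simp_all add: carrier_dihedral_group)
  then have "dihedral_word G x y \<in> iso (dihedral_group n) G"
    using dihedral_word_hom[OF gens n(1)] dihedral_word_surj[OF gens n(1) n0]
    by (simp add: iso_def bij_betw_def)
  then have "dihedral_group n \<cong> G"
    unfolding is_iso_def by blast
  moreover have "group (dihedral_group n)"
    using group_dihedral_group n0 .
  ultimately show ?thesis
    using group.iso_sym by blast
qed

lemma dihedral_generators_outside_involution:
  assumes gens: "dihedral_generators G x y" and g: "g \<in> carrier G" "g \<notin> generate G {x}"
  shows "g \<otimes> g = \<one>"
proof -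
  have x: "x \<in> carrier G" and y: "y \<in> carrier G" and yy: "y \<otimes> y = \<one>"
    and yx: "y \<otimes> x \<otimes> inv y = inv x"
    and carrier: "carrier G = generate G {x} \<union> (generate G {x} #> y)"
    using gens unfolding dihedral_generators_def by auto
  obtain c where c: "c \<in> generate G {x}" "g = c \<otimes> y"
    using g carrier unfolding r_coset_def by blast
  then obtain i :: int where i: "c = x [^] i"
    using generate_pow[OF x] by blast
  have "y \<otimes> c \<otimes> inv y = inv c"
    using conj_int_pow[OF y x, of i] yx i x by (simp add: int_pow_inv)
  moreover have "inv y = y"
    using inv_equality[OF yy y y] .
  moreover have "c \<in> carrier G"
    using i x by simp
  ultimately show ?thesis
    using c(2) y yy by (metis m_assoc m_closed r_inv r_one)
qed

lemma enh_nbhd_dihedral_subset: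
  assumes fin: "finite (carrier G)" and gens: "dihedral_generators G x y"
    and a: "a \<in> carrier G" "a \<noteq> \<one>"
  shows "enh_nbhd G a \<subseteq> (if a \<in> generate G {x} then generate G {x} else {\<one>, a})"
proof
  let ?C = "generate G {x}"
  have x: "x \<in> carrier G"
    using gens unfolding dihedral_generators_def by blast
  fix b assume "b \<in> enh_nbhd G a"
  then obtain g where g: "g \<in> carrier G" "a \<in> generate G {g}" "b \<in> generate G {g}"
    using enh_nbhd_iff[OF fin a(1)] by blast
  show "b \<in> (if a \<in> ?C then ?C else {\<one>, a})"
  proof (cases "g \<in> ?C")
    case True
    then have "generate G {g} \<subseteq> ?C"
      using generate_subgroup_incl[of "{g}" ?C] generate_is_subgroup[of "{x}"] x by simp
    then show ?thesis
      using g by auto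
  next
    case False
    then have "g \<otimes> g = \<one>"
      using dihedral_generators_outside_involution[OF gens g(1)] by blast
    then have sub: "generate G {g} \<subseteq> {\<one>, g}"
      using generate_involution[OF g(1)] by blast
    then have "a = g"
      using g(2) a(2) by blast
    then show ?thesis
      using sub g(3) False by auto
  qed
qed

lemma n_G_le_ord_dihedral:
  assumes fin: "finite (carrier G)" and gens: "dihedral_generators G x y"
    and two: "2 \<le> ord x"
  shows "n_G G \<le> ord x"
proof -
  let ?C = "generate G {x}"
  have x: "x \<in> carrier G" and y: "y \<in> carrier G" and yC: "y \<notin> ?C"
    using gens unfolding dihedral_generators_def by auto
  have "carrier G \<noteq> {\<one>}"
    using y yC generate.one[of G "{x}"] by auto
  moreover have "card (enh_nbhd G a) \<le> ord x" if a: "a \<in> carrier G" "a \<noteq> \<one>" for a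
  proof (cases "a \<in> ?C")
    case True
    then have "card (enh_nbhd G a) \<le> card ?C"
      using enh_nbhd_dihedral_subset[OF fin gens a] x generate_in_carrier[of "{x}"]
      by (intro card_mono) (auto intro: finite_subset[OF _ fin])
    then show ?thesis
      using generate_pow_card[OF x] by simp
  next
    case False
    then have "card (enh_nbhd G a) \<le> card {\<one>, a}"
      using enh_nbhd_dihedral_subset[OF fin gens a] by (intro card_mono) auto
    also have "\<dots> \<le> 2"
      by (simp add: card_insert_le_m1)
    finally show ?thesis
      using two by simp
  qed
  ultimately show ?thesis
    by (rule n_G_le[OF fin])
qed

lemma n_G_le_group_exp_dihedral:
  assumes fin: "finite (carrier G)" and m: "1 \<le> m" and iso: "G \<cong> dihedral_group (2 ^ m)"
  shows "n_G G \<le> group_exp G"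
proof -
  have two: "2 \<le> (2::nat) ^ m"
    using power_increasing[of 1 m "2::nat"] m by simp
  then obtain x y where gens: "dihedral_generators G x y" and ord: "ord x = 2 ^ m"
    using iso_dihedral_group_imp_generators iso by blast
  then have "x \<in> carrier G"
    unfolding dihedral_generators_def by blast
  have "n_G G \<le> ord x"
    using n_G_le_ord_dihedral[OF fin gens] ord two by simp
  also have "ord x \<le> group_exp G"
    using ord_dvd_group_exp[OF \<open>x \<in> carrier G\<close>] group_exp_pos[OF fin] by (rule dvd_imp_le)
  finally show ?thesis .
qed

end

section \<open>\<open>p\<close>-groups in which \<open>n\<^sub>G\<close> equals the exponent\<close>

locale p_group_n_G_le_ord = group +
  fixes p k e :: nat and x :: 'a
  assumes finite_carrier: "finite (carrier G)"
    and prime_p: "Factorial_Ring.prime p"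
    and card_carrier: "card (carrier G) = p ^ k"
    and x_closed: "x \<in> carrier G"
    and ord_x: "ord x = p ^ e"
    and two_le_e: "2 \<le> e"
    and n_G_le: "n_G G \<le> p ^ e"
begin

abbreviation C where "C \<equiv> generate G {x}"

abbreviation N where "N \<equiv> {g \<in> carrier G. g \<otimes> x \<otimes> inv g \<in> C}"

lemma C_subgroup: "subgroup C G"
  using generate_is_subgroup x_closed by simp

lemma C_subset: "C \<subseteq> carrier G"
  using subgroup.subset[OF C_subgroup] .

lemma x_in_C: "x \<in> C"
  by (simp add: generate.incl)

lemma C_eq_nat_pows: "C = {x [^] r | r::nat. True}"
  using generate_pow_on_finite_carrier[OF finite_carrier x_closed] by simp

lemma x_pow_p_ne_one: "x [^] p \<noteq> \<one>"
proof
  assume "x [^] p = \<one>"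
  then have "p ^ e dvd p ^ 1"
    using pow_eq_id[OF x_closed] ord_x by simp
  then have "e \<le> 1"
    using prime_p power_dvd_imp_le prime_gt_1_nat by blast
  with two_le_e show False
    by simp
qed

lemma enh_nbhd_C:
  assumes c: "c \<in> C" "c \<noteq> \<one>"
  shows "enh_nbhd G c = C"
proof -
  have cG: "c \<in> carrier G"
    using c C_subset by blast
  have sub: "C \<subseteq> enh_nbhd G c"
    using enh_nbhd_iff[OF finite_carrier cG] c(1) C_subset x_closed by blast
  have "card (enh_nbhd G c) \<le> card C"
    using card_enh_nbhd_le_n_G[OF finite_carrier cG c(2)] n_G_le ord_x
      generate_pow_card[OF x_closed] by simp
  moreover have "finite (enh_nbhd G c)"
    using enh_nbhd_subset_carrier finite_carrier by (rule finite_subset)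
  ultimately show ?thesis
    using card_seteq[OF _ sub] by simp
qed

lemma pow_in_C_eq_one:
  assumes y: "y \<in> carrier G" "y \<notin> C" and yn: "y [^] (n::nat) \<in> C"
  shows "y [^] n = \<one>"
proof (rule ccontr)
  assume "y [^] n \<noteq> \<one>"
  then have "enh_nbhd G (y [^] n) = C"
    using enh_nbhd_C yn by blast
  moreover have "y \<in> enh_nbhd G (y [^] n)"
    using enh_nbhd_iff[OF finite_carrier nat_pow_closed[OF y(1)]] y(1)
      generate_pow_on_finite_carrier[OF finite_carrier y(1)] generate.incl[of y "{y}" G] by blast
  ultimately show False
    using y(2) by simp
qed

lemma commute_x_imp_in_C:
  assumes y: "y \<in> carrier G" and comm: "x \<otimes> y = y \<otimes> x"
  shows "y \<in> C"
proof (rule ccontr)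
  assume yC: "y \<notin> C"
  obtain a where "ord y = p ^ a"
    using p_group_ord[OF prime_p card_carrier y] by blast
  then have "y [^] (p ^ a) \<in> {\<one>}"
    using pow_ord_eq_1[OF y] by simp
  moreover have "y \<notin> {\<one>}"
    using yC generate.one[of G "{x}"] by blast
  ultimately obtain j where z: "y [^] (p ^ j) \<noteq> \<one>" "(y [^] (p ^ j)) [^] p = \<one>"
    using pow_prime_power_leaves_set[OF y] by blast
  define z where "z = y [^] (p ^ j)"
  have zG: "z \<in> carrier G"
    using y by (simp add: z_def)
  have zC: "z \<notin> C"
    using pow_in_C_eq_one[OF y yC] z(1) unfolding z_def by blast
  have xz: "x \<otimes> z = z \<otimes> x"
    unfolding z_def using group_commutes_pow[OF comm[symmetric] y x_closed] by simp
  have "(x \<otimes> z) [^] p = x [^] p"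
    using pow_mult_distrib[OF xz x_closed zG] z(2) x_closed by (simp add: z_def)
  moreover have "x \<otimes> z \<notin> C"
    using mult_notin_subgroup[OF C_subgroup x_in_C zG zC] .
  moreover have "x [^] p \<in> C"
    using subgroup_nat_pow_closed[OF C_subgroup x_in_C] .
  ultimately have "x [^] p = \<one>"
    using pow_in_C_eq_one x_closed zG by (metis m_closed)
  with x_pow_p_ne_one show False ..
qed

lemma N_conj_C:
  assumes g: "g \<in> N" and c: "c \<in> C"
  shows "g \<otimes> c \<otimes> inv g \<in> C"
proof -
  obtain i :: int where "c = x [^] i"
    using c generate_pow[OF x_closed] by blast
  then have "g \<otimes> c \<otimes> inv g = (g \<otimes> x \<otimes> inv g) [^] i"
    using conj_int_pow g x_closed by simp
  then show ?thesis
    using subgroup_int_pow_closed[OF C_subgroup] g by simp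
qed

lemma N_subgroup: "subgroup N G"
proof (rule finite_subgroupI[OF finite_carrier])
  show "\<one> \<in> N"
    using x_closed x_in_C by simp
  fix g h assume g: "g \<in> N" and h: "h \<in> N"
  then have "g \<otimes> h \<otimes> x \<otimes> inv (g \<otimes> h) = g \<otimes> (h \<otimes> x \<otimes> inv h) \<otimes> inv g"
    using x_closed by (simp add: inv_mult_group m_assoc)
  then show "g \<otimes> h \<in> N"
    using N_conj_C[OF g] g h by simp
qed auto

lemma x_in_N: "x \<in> N"
  using x_closed x_in_C by (simp add: m_assoc)

lemma exists_order_p_in_N_minus_C:
  assumes proper: "C \<noteq> carrier G"
  shows "\<exists>h \<in> N - C. h [^] p = \<one>"
proof -
  obtain g where g: "g \<in> carrier G - C" "\<forall>c \<in> C. g \<otimes> c \<otimes> inv g \<in> C"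
    using p_group_normalizer_exceeds_subgroup[OF finite_carrier prime_p card_carrier C_subgroup proper]
    by blast
  then have gN: "g \<in> N"
    using x_in_C by blast
  obtain a where "ord g = p ^ a"
    using p_group_ord[OF prime_p card_carrier] g(1) by blast
  then have "g [^] (p ^ a) \<in> C"
    using pow_ord_eq_1[of g] g(1) generate.one[of G "{x}"] by simp
  then obtain j where h: "g [^] (p ^ j) \<notin> C" "(g [^] (p ^ j)) [^] p \<in> C"
    using pow_prime_power_leaves_set[of g C] g(1) by blast
  moreover have "g [^] (p ^ j) \<in> N"
    using subgroup_nat_pow_closed[OF N_subgroup gN] .
  ultimately show ?thesis
    using pow_in_C_eq_one[of "g [^] (p ^ j)"] g(1) by blast
qed

lemma conj_exponent_cong_one:
  assumes h: "h \<in> carrier G" "h [^] p = \<one>" and r: "h \<otimes> x \<otimes> inv h = x [^] r"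
  shows "[r = 1] (mod p)"
proof -
  have "x [^] (r ^ p) = x [^] (1::nat)"
    using conj_pow_eq_pow_pow[OF h(1) x_closed r, of p] h(2) x_closed by simp
  then have "[r ^ p = 1] (mod p ^ e)"
    using iffD1[OF pow_eq_pow_iff_cong[OF x_closed]] ord_x by simp
  moreover have "p dvd p ^ e"
    using two_le_e by (simp add: dvd_power)
  ultimately have "[r ^ p = 1] (mod p)"
    by (rule cong_dvd_modulus_nat)
  then show ?thesis
    by (rule pow_prime_cong_one_imp_cong_one[OF prime_p])
qed

lemma p_eq_2:
  assumes proper: "C \<noteq> carrier G"
  shows "p = 2"
proof (rule ccontr)
  assume "p \<noteq> 2"
  obtain h where h: "h \<in> N" "h \<notin> C" "h [^] p = \<one>"
    using exists_order_p_in_N_minus_C[OF proper] by blast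
  have hG: "h \<in> carrier G"
    using h(1) by simp
  obtain r :: nat where r: "h \<otimes> x \<otimes> inv h = x [^] r"
    using h(1) C_eq_nat_pows by blast
  have "\<not> p\<^sup>2 dvd (\<Sum>i<p. r ^ i)"
    using prime_square_not_dvd_geometric_sum[OF prime_p \<open>p \<noteq> 2\<close>]
      conj_exponent_cong_one[OF hG h(3) r] by blast
  moreover have "(x \<otimes> h) [^] p = x [^] (\<Sum>i<p. r ^ i)"
    using mult_pow_eq_pow_sum[OF hG x_closed r, of p] h(3) x_closed by simp
  then have "x [^] (\<Sum>i<p. r ^ i) = \<one>"
    using pow_in_C_eq_one[of "x \<otimes> h" p] mult_notin_subgroup[OF C_subgroup x_in_C hG h(2)]
      subgroup_nat_pow_closed[OF C_subgroup x_in_C] hG x_closed by simp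
  then have "p ^ e dvd (\<Sum>i<p. r ^ i)"
    using pow_eq_id[OF x_closed] ord_x by simp
  with le_imp_power_dvd[OF two_le_e] have "p\<^sup>2 dvd (\<Sum>i<p. r ^ i)"
    by (rule dvd_trans)
  ultimately show False ..
qed

lemma N_minus_C_inverts_if_square_in_C:
  assumes g: "g \<in> N" "g \<notin> C" and gg: "g \<otimes> g \<in> C"
  shows "g \<otimes> g = \<one> \<and> g \<otimes> x \<otimes> inv g = inv x"
proof -
  have gG: "g \<in> carrier G"
    using g(1) by simp
  have g1: "g \<otimes> g = \<one>"
    using pow_in_C_eq_one[OF gG g(2), of 2] gg nat_pow_two[OF gG] by simp
  have xg: "x \<otimes> g \<in> carrier G" "x \<otimes> g \<notin> C"
    using gG x_closed mult_notin_subgroup[OF C_subgroup x_in_C gG g(2)] by auto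
  have "inv g = g"
    using inv_equality[OF g1 gG gG] .
  then have "(x \<otimes> g) \<otimes> (x \<otimes> g) = x \<otimes> (g \<otimes> x \<otimes> inv g) \<otimes> (g \<otimes> g)"
    using x_closed gG g1 by (simp add: m_assoc)
  also have "\<dots> \<in> C"
    using g(1) g1 x_in_C generate.one[of G "{x}"] subgroup.m_closed[OF C_subgroup] by simp
  finally have "(x \<otimes> g) \<otimes> (x \<otimes> g) = \<one>"
    using pow_in_C_eq_one[OF xg, of 2] nat_pow_two[OF xg(1)] by simp
  then have "x \<otimes> (g \<otimes> x \<otimes> g) = \<one>"
    using x_closed gG by (simp add: m_assoc)
  then have "inv x = g \<otimes> x \<otimes> g"
    using x_closed gG by (intro inv_equality[OF inv_comm]) simp_all
  then have "g \<otimes> x \<otimes> inv g = inv x"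
    using \<open>inv g = g\<close> by simp
  with g1 show ?thesis
    by blast
qed

lemma square_not_inverting:
  assumes p2: "p = 2" and w: "w \<in> N"
  shows "(w \<otimes> w) \<otimes> x \<otimes> inv (w \<otimes> w) \<noteq> inv x"
proof
  assume inverts: "(w \<otimes> w) \<otimes> x \<otimes> inv (w \<otimes> w) = inv x"
  have wG: "w \<in> carrier G"
    using w by simp
  obtain s :: nat where s: "w \<otimes> x \<otimes> inv w = x [^] s"
    using w C_eq_nat_pows by blast
  have "(w \<otimes> w) \<otimes> x \<otimes> inv (w \<otimes> w) = x [^] (s ^ 2)"
    using conj_pow_eq_pow_pow[OF wG x_closed s, of 2] nat_pow_two[OF wG] by simp
  then have "x [^] (s * s) = inv x"
    using inverts by (simp add: power2_eq_square)
  then have "x [^] (s * s + 1) = \<one>"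
    using x_closed by simp
  then have "ord x dvd s * s + 1"
    by (rule iffD1[OF pow_eq_id[OF x_closed]])
  then have "2 ^ e dvd s * s + 1"
    using ord_x p2 by simp
  with le_imp_power_dvd[OF two_le_e, of "2::nat"] have "4 dvd s * s + 1"
    by (simp add: dvd_trans)
  with four_not_dvd_square_plus_one show False ..
qed

lemma square_in_C:
  assumes p2: "p = 2" and g: "g \<in> N"
  shows "g \<otimes> g \<in> C"
proof (rule ccontr)
  assume ggC: "g \<otimes> g \<notin> C"
  have gG: "g \<in> carrier G"
    using g by simp
  obtain a where "ord (g \<otimes> g) = 2 ^ a"
    using p_group_ord[OF prime_p card_carrier] gG p2 by blast
  then have "(g \<otimes> g) [^] ((2::nat) ^ a) \<in> C"
    using pow_ord_eq_1[of "g \<otimes> g"] gG generate.one[of G "{x}"] by simp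
  then obtain j where j: "(g \<otimes> g) [^] ((2::nat) ^ j) \<notin> C"
    "((g \<otimes> g) [^] ((2::nat) ^ j)) [^] (2::nat) \<in> C"
    using pow_prime_power_leaves_set[of "g \<otimes> g" C] gG ggC by blast
  define w where "w = g [^] (2 ^ j :: nat)"
  have wG: "w \<in> carrier G" and wN: "w \<in> N"
    using gG subgroup_nat_pow_closed[OF N_subgroup g] by (simp_all add: w_def)
  have "w \<otimes> w = (g \<otimes> g) [^] ((2::nat) ^ j)"
    using gG nat_pow_two[OF wG, symmetric] nat_pow_two[OF gG, symmetric]
    by (simp add: w_def nat_pow_pow mult.commute)
  then have "w \<otimes> w \<notin> C" "(w \<otimes> w) \<otimes> (w \<otimes> w) \<in> C"
    using j nat_pow_two[OF m_closed[OF wG wG]] by simp_all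
  then have "(w \<otimes> w) \<otimes> x \<otimes> inv (w \<otimes> w) = inv x"
    using N_minus_C_inverts_if_square_in_C subgroup.m_closed[OF N_subgroup wN wN] by blast
  with square_not_inverting[OF p2 wN] show False ..
qed

lemma N_minus_C_inverts:
  assumes "p = 2" and "g \<in> N" and "g \<notin> C"
  shows "g \<otimes> g = \<one> \<and> g \<otimes> x \<otimes> inv g = inv x"
  using N_minus_C_inverts_if_square_in_C square_in_C assms by blast

lemma N_eq_carrier:
  assumes p2: "p = 2"
  shows "N = carrier G"
proof (rule ccontr)
  assume "N \<noteq> carrier G"
  then obtain g where g: "g \<in> carrier G - N" "\<forall>h \<in> N. g \<otimes> h \<otimes> inv g \<in> N"
    using p_group_normalizer_exceeds_subgroup[OF finite_carrier prime_p card_carrier N_subgroup]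
    by blast
  define z where "z = g \<otimes> x \<otimes> inv g"
  have "z \<in> N" "z \<notin> C"
    using g x_in_N by (auto simp: z_def)
  then have "z \<otimes> z = \<one>"
    using N_minus_C_inverts[OF p2] by blast
  moreover have "z \<otimes> z = g \<otimes> (x \<otimes> x) \<otimes> inv g"
    using g(1) x_closed by (simp add: z_def m_assoc)
  moreover have "x \<otimes> x = inv g \<otimes> (g \<otimes> (x \<otimes> x) \<otimes> inv g) \<otimes> g"
    using g(1) x_closed by (simp add: m_assoc)
  ultimately have "x \<otimes> x = \<one>"
    using g(1) by simp
  then show False
    using x_pow_p_ne_one p2 x_closed by (simp add: numeral_2_eq_2)
qed

lemma carrier_eq_C_union_coset:
  assumes p2: "p = 2" and y: "y \<in> N" "y \<notin> C"
  shows "carrier G = C \<union> (C #> y)"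
proof
  have yG: "y \<in> carrier G"
    using y(1) by simp
  show "C \<union> (C #> y) \<subseteq> carrier G"
    using C_subset r_coset_subset_G[OF C_subset yG] by blast
  show "carrier G \<subseteq> C \<union> (C #> y)"
  proof
    fix g assume gG: "g \<in> carrier G"
    show "g \<in> C \<union> (C #> y)"
    proof (cases "g \<in> C")
      case False
      have g: "g \<otimes> g = \<one>" "g \<otimes> x \<otimes> inv g = inv x"
        using N_minus_C_inverts[OF p2] N_eq_carrier[OF p2] gG False by blast+
      have y': "y \<otimes> y = \<one>" "y \<otimes> x \<otimes> inv y = inv x"
        using N_minus_C_inverts[OF p2 y] by blast+
      define z where "z = g \<otimes> y"
      have zG: "z \<in> carrier G"
        using gG yG by (simp add: z_def)
      have "z \<otimes> x \<otimes> inv z = g \<otimes> (y \<otimes> x \<otimes> inv y) \<otimes> inv g"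
        using gG yG x_closed by (simp add: z_def inv_mult_group m_assoc)
      also have "\<dots> = inv (g \<otimes> x \<otimes> inv g)"
        using y'(2) gG x_closed by (simp add: inv_mult_group m_assoc)
      also have "\<dots> = x"
        using g(2) x_closed by simp
      finally have "x \<otimes> z = z \<otimes> x"
        using zG x_closed by (simp add: inv_solve_right')
      then have "z \<in> C"
        using commute_x_imp_in_C[OF zG] by simp
      moreover have "g = z \<otimes> y"
        using gG yG y'(1) by (simp add: z_def m_assoc)
      ultimately show ?thesis
        unfolding r_coset_def by blast
    qed simp
  qed
qed

theorem iso_dihedral_group:
  assumes proper: "C \<noteq> carrier G"
  shows "G \<cong> dihedral_group (2 ^ e)"
proof -
  have p2: "p = 2"
    using p_eq_2[OF proper] .
  obtain y where y: "y \<in> N" "y \<notin> C"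
    using exists_order_p_in_N_minus_C[OF proper] by blast
  have "dihedral_generators G x y"
    unfolding dihedral_generators_def
    using x_closed y N_minus_C_inverts[OF p2 y] carrier_eq_C_union_coset[OF p2 y] by simp
  moreover have "2 \<le> (2::nat) ^ e"
    using power_increasing[of 1 e "2::nat"] two_le_e by simp
  ultimately show ?thesis
    using dihedral_generators_imp_iso ord_x p2 by simp
qed

end

lemma (in group) n_G_eq_group_exp_imp_classification:
  assumes fin: "finite (carrier G)" and p: "Factorial_Ring.prime p"
    and card: "card (carrier G) = p ^ k" and nontrivial: "carrier G \<noteq> {\<one>}"
    and eq: "n_G G = group_exp G"
  shows "cyclic_group G \<or> group_exp G = p \<or> (\<exists>m::nat. m \<ge> 1 \<and> G \<cong> dihedral_group (2 ^ m))"
proof -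
  obtain x where x: "x \<in> carrier G" "ord x = group_exp G"
    using p_group_exp_attained[OF fin p card] by blast
  obtain e where e: "ord x = p ^ e"
    using p_group_ord[OF p card x(1)] by blast
  have "e \<noteq> 0"
    using x e nontrivial group_exp_eq_one_imp_trivial by auto
  show ?thesis
  proof (cases "e = 1 \<or> generate G {x} = carrier G")
    case True
    then show ?thesis
      using x e generate_singleton_eq_range[OF x(1)] cyclic_group by auto
  next
    case False
    then have "2 \<le> e"
      using \<open>e \<noteq> 0\<close> by simp
    then interpret p_group_n_G_le_ord G p k e x
      using fin p card x e eq by unfold_locales simp_all
    have "G \<cong> dihedral_group (2 ^ e)"
      using iso_dihedral_group False by simp
    then show ?thesis
      using \<open>2 \<le> e\<close> by auto
  qed
qed

theorem theorem1p1:
  fixes G :: "('a, 'b) monoid_scheme" and p k :: nat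
  assumes "group G" and "finite (carrier G)" and "Factorial_Ring.prime p"
    and "card (carrier G) = p ^ k"
    and "carrier G \<noteq> {\<one>\<^bsub>G\<^esub>}"
  shows "n_G G = group_exp G \<longleftrightarrow>
           cyclic_group G \<or> group_exp G = p \<or>
           (\<exists>m::nat. m \<ge> 1 \<and> G \<cong> dihedral_group (2 ^ m))"
proof -
  interpret group G by fact
  note p_group = assms(2-5)
  have "n_G G \<le> group_exp G"
    if "cyclic_group G \<or> group_exp G = p \<or> (\<exists>m::nat. m \<ge> 1 \<and> G \<cong> dihedral_group (2 ^ m))"
    using that
  proof (elim disjE exE conjE)
    assume "cyclic_group G"
    then show ?thesis
      using n_G_le_order group_exp_cyclic p_group by simp
  next
    assume "group_exp G = p"
    then show ?thesis
      using n_G_le_prime_group_exp p_group by simp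
  next
    fix m :: nat
    assume "m \<ge> 1" "G \<cong> dihedral_group (2 ^ m)"
    then show ?thesis
      by (rule n_G_le_group_exp_dihedral[OF p_group(1)])
  qed
  then show ?thesis
    using group_exp_le_n_G[OF p_group] n_G_eq_group_exp_imp_classification[OF p_group]
    by (auto intro: le_antisym)
qed

end
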